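(* Let $q$ be odd with $q\equiv1\pmod 4$, and let $\delta\in\mathbb{F}_{q^8}^*$ with $\delta\neq\pm1$ and $\delta^2=-1$. Then $S(x)=x^q+\delta x^{q^5}$ is not a scattered polynomial of index $t$ over $\mathbb{F}_{q^8}$ for either $t=1$ or $t=5$.
   Context: An $\mathbb{F}_q$-linearized polynomial $S\in\mathbb{F}_{q^n}[x]$ is a scattered polynomial of index $t$ over $\mathbb{F}_{q^n}$ if for all $y,z\in\mathbb{F}_{q^n}^*$, $\frac{S(y)}{y^{q^t}}=\frac{S(z)}{z^{q^t}}$ implies $y/z\in\mathbb{F}_q$. *)

theory Defs
  imports "HOL-Computational_Algebra.Primes"
begin

text \<open>The field F_{q^n} is modelled by a finite field type 'a of cardinality q^n; its
subfield F_q is the set of elements with y^q = y.\<close>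

definition scattered_index :: "nat \<Rightarrow> nat \<Rightarrow> ('a::field \<Rightarrow> 'a) \<Rightarrow> bool" where
  "scattered_index q t S \<longleftrightarrow>
     (\<forall>y z. y \<noteq> 0 \<longrightarrow> z \<noteq> 0 \<longrightarrow> S y / y ^ (q ^ t) = S z / z ^ (q ^ t) \<longrightarrow> (y / z) ^ q = y / z)"

end

theory Submission
  imports Defs "HOL-Computational_Algebra.Polynomial" "HOL-Library.Cardinality"
begin

text \<open>On the subfield \<open>F_{q^4}\<close> of \<open>F_{q^8}\<close> we have \<open>x^{q^5} = x^q\<close>, so there
  \<open>S(x) = (1 + \<delta>) x^q\<close> and hence \<open>S(x)/x^{q^t} = 1 + \<delta>\<close> for both \<open>t = 1\<close> and \<open>t = 5\<close>.
  Any element of \<open>F_{q^4}\<close> outside \<open>F_q\<close> therefore has the same ratio as \<open>1\<close>,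
  violating scatteredness. Such an element is \<open>a^{q^4+1}\<close> for any \<open>a\<close> of multiplicative
  order not dividing \<open>(q^4+1)(q-1)\<close>; it exists because \<open>x^N = 1\<close> has at most \<open>N\<close>
  roots.\<close>

lemma finite_field_power_card_minus_one:
  fixes a :: "'a::{field,finite}"
  assumes "a \<noteq> 0"
  shows "a ^ (CARD('a) - 1) = 1"
proof -
  let ?U = "UNIV - {0::'a}"
  have bij: "bij_betw (\<lambda>x. a * x) ?U ?U"
    by (rule bij_betw_byWitness[where f'="\<lambda>x. x / a"]) (use assms in auto)
  have "prod id ?U = prod (id \<circ> (\<lambda>x. a * x)) ?U"
    using prod.reindex_bij_betw[OF bij, of id] by simp
  also have "\<dots> = a ^ card ?U * prod id ?U"
    by (simp add: prod.distrib)
  finally have "1 * prod id ?U = a ^ card ?U * prod id ?U" by simp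
  moreover have "prod id ?U \<noteq> 0" by (simp add: prod_zero_iff)
  moreover have "card ?U = CARD('a) - 1" by (simp add: card_Diff_singleton)
  ultimately show ?thesis by (metis mult_right_cancel)
qed

lemma finite_field_power_card:
  fixes a :: "'a::{field,finite}"
  shows "a ^ CARD('a) = a"
proof (cases "a = 0")
  case False
  have "CARD('a) = Suc (CARD('a) - 1)"
    using finite_UNIV_card_ge_0 by (simp add: Suc_diff_1)
  then show ?thesis
    using finite_field_power_card_minus_one[OF False] by (metis power_Suc mult.right_neutral)
qed simp

lemma card_roots_of_unity_le:
  assumes "n > 0"
  shows "card {x::'a::field. x ^ n = 1} \<le> n"
proof -
  let ?p = "monom (1::'a) n - 1"
  have "coeff ?p n = 1" using assms by (simp add: coeff_diff)
  then have "?p \<noteq> 0" by (metis coeff_0 zero_neq_one)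
  moreover have "degree ?p \<le> n"
    by (intro degree_diff_le degree_monom_le) auto
  moreover have "{x::'a. x ^ n = 1} = {x. poly ?p x = 0}"
    by (simp add: poly_monom)
  ultimately show ?thesis using card_poly_roots_bound by (metis order_trans)
qed

lemma finite_field_exists_non_root_of_unity:
  assumes "0 < n" and "n < CARD('a::{field,finite}) - 1"
  shows "\<exists>a::'a. a \<noteq> 0 \<and> a ^ n \<noteq> 1"
proof (rule ccontr)
  assume "\<not> ?thesis"
  then have "UNIV - {0::'a} \<subseteq> {x. x ^ n = 1}" by auto
  then have "card (UNIV - {0::'a}) \<le> card {x::'a. x ^ n = 1}"
    by (intro card_mono) auto
  with card_roots_of_unity_le[OF \<open>0 < n\<close>, where 'a='a] assms(2) show False
    by (simp add: card_Diff_singleton)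
qed

lemma finite_field_exists_in_subfield_not_in_base:
  assumes card: "CARD('a::{field,finite}) = q ^ (2 * m)" and "2 \<le> m"
  shows "\<exists>w::'a. w \<noteq> 0 \<and> w ^ (q ^ m) = w \<and> w ^ q \<noteq> w"
proof -
  have "card {0::'a, 1} \<le> CARD('a)" by (rule card_mono) auto
  then have "2 \<le> q ^ (2 * m)" by (simp add: card)
  moreover have "0 ^ (2 * m) = (0::nat)" using \<open>2 \<le> m\<close> by simp
  ultimately have "q \<noteq> 0" and "q \<noteq> 1" by (metis not_numeral_le_zero, auto)
  then have q2: "2 \<le> q" by linarith
  have square_minus_one: "(x + 1) * (x - 1) = x * x - 1" for x :: nat
    by (cases x) simp_all
  define n where "n = (q ^ m + 1) * (q - 1)"
  have "q < q ^ m"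
    using power_strict_increasing[of 1 m q] q2 \<open>2 \<le> m\<close> by simp
  then have "q - 1 < q ^ m - 1"
    using q2 by linarith
  then have "n < (q ^ m + 1) * (q ^ m - 1)"
    unfolding n_def by (intro mult_strict_left_mono) auto
  also have "\<dots> = q ^ m * q ^ m - 1"
    by (rule square_minus_one)
  also have "\<dots> = CARD('a) - 1"
    by (simp add: card mult_2 power_add)
  finally obtain a :: 'a where "a \<noteq> 0" and "a ^ n \<noteq> 1"
    using finite_field_exists_non_root_of_unity[of n] q2 unfolding n_def by auto
  define w where "w = a ^ (q ^ m + 1)"
  have "w \<noteq> 0" using \<open>a \<noteq> 0\<close> by (simp add: w_def)
  moreover have "w ^ q \<noteq> w"
  proof
    assume "w ^ q = w"
    moreover have "w ^ (q - 1) * w = w ^ q"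
      using q2 by (intro power_minus_mult) simp
    ultimately have "w ^ (q - 1) * w = 1 * w" by simp
    then have "w ^ (q - 1) = 1" using \<open>w \<noteq> 0\<close> by simp
    with \<open>a ^ n \<noteq> 1\<close> show False unfolding w_def n_def by (metis power_mult)
  qed
  moreover have "w ^ (q ^ m) = w"
  proof -
    have "w ^ (q ^ m) = a ^ (q ^ m * q ^ m) * a ^ (q ^ m)"
      unfolding w_def by (simp add: power_mult[symmetric] algebra_simps power_add)
    also have "q ^ m * q ^ m = CARD('a)"
      by (simp add: card mult_2 power_add)
    finally have "w ^ (q ^ m) = a ^ CARD('a) * a ^ (q ^ m)" .
    then show ?thesis
      by (simp add: finite_field_power_card w_def power_add)
  qed
  ultimately show ?thesis by blast
qed

lemma not_scattered_indexI:
  fixes w :: "'a::field"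
  assumes "w \<noteq> 0" and "w ^ q \<noteq> w" and "S w / w ^ (q ^ t) = S 1"
  shows "\<not> scattered_index q t S"
  using assms unfolding scattered_index_def by (metis div_by_1 one_neq_zero power_one)

theorem mainTheorem11:
  fixes q p k :: nat and \<delta> :: "'a::{field,finite}"
  assumes "prime p" and "k > 0" and "q = p ^ k"
    and "odd q" and "q mod 4 = 1"
    and "card (UNIV :: 'a set) = q ^ 8"
    and "\<delta> \<noteq> 0" and "\<delta> \<noteq> 1" and "\<delta> \<noteq> -1" and "\<delta>\<^sup>2 = -1"
  shows "\<not> scattered_index q 1 (\<lambda>x. x ^ q + \<delta> * x ^ (q ^ 5)) \<and>
         \<not> scattered_index q 5 (\<lambda>x. x ^ q + \<delta> * x ^ (q ^ 5))"
proof -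
  obtain w :: 'a where "w \<noteq> 0" and w4: "w ^ (q ^ 4) = w" and "w ^ q \<noteq> w"
    using finite_field_exists_in_subfield_not_in_base[of q 4] assms(6) by auto
  have "w ^ (q ^ 5) = (w ^ (q ^ 4)) ^ q"
    by (simp flip: power_mult power_Suc2)
  with w4 have w5: "w ^ (q ^ 5) = w ^ q" by simp
  have "w ^ q \<noteq> 0" using \<open>w \<noteq> 0\<close> by simp
  then have "(w ^ q + \<delta> * w ^ (q ^ 5)) / w ^ (q ^ 1) = 1 + \<delta>"
    and "(w ^ q + \<delta> * w ^ (q ^ 5)) / w ^ (q ^ 5) = 1 + \<delta>"
    using w5 by (simp_all add: field_simps)
  then show ?thesis
    using not_scattered_indexI[OF \<open>w \<noteq> 0\<close> \<open>w ^ q \<noteq> w\<close>, of "\<lambda>x. x ^ q + \<delta> * x ^ (q ^ 5)"]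
    by simp
qed

end
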